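(* Let $R$ be a commutative ring, let $p\in\mathbb{Z}$ be a prime, and let $F(x,y)\in R[[x,y]]$ be a (one-parameter, commutative) formal group law over $R$. Let $\iota(t)\in R[[t]]$ be the inversion series of $F$ and $M_p(t)\in R[[t]]$ its multiplication-by-$p$ series. Then $$ M_p\bigl(F(x,\iota(y))\bigr)\in (x^p-y^p)R[[x,y]]+pR[[x,y]].$$
   Context: A formal group law over $R$ is a power series $F(x,y)=x+y+(\text{terms of degree}\ge2)$ satisfying associativity and commutativity; $\iota(t)$ is the unique series with $F(t,\iota(t))=0$, and $M_p(t)$ is defined by $M_1(t)=t$, $M_{n}(t)=F(M_{n-1}(t),t)$. *)

theory Defs
  imports "HOL-Computational_Algebra.Formal_Power_Series" "HOL-Computational_Algebra.Primes"
begin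

text \<open>Conventions. R[[t]] is 'a fps. R[[x,y]] is represented as 'a fps fps
 (outer variable y, inner variable x), R[[x,y,z]] as 'a fps fps fps
 (outer z, then y, innermost x).\<close>

definition coeff2 :: "'a fps fps \<Rightarrow> nat \<Rightarrow> nat \<Rightarrow> 'a" where
  "coeff2 G i j = fps_nth (fps_nth G j) i"

definition coeff3 :: "'a fps fps fps \<Rightarrow> nat \<Rightarrow> nat \<Rightarrow> nat \<Rightarrow> 'a" where
  "coeff3 G i j k = fps_nth (fps_nth (fps_nth G k) j) i"

definition X2 :: "'a::comm_ring_1 fps fps" where "X2 = fps_const fps_X"
definition Y2 :: "'a::comm_ring_1 fps fps" where "Y2 = fps_X"

definition X3 :: "'a::comm_ring_1 fps fps fps" where "X3 = fps_const (fps_const fps_X)"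
definition Y3 :: "'a::comm_ring_1 fps fps fps" where "Y3 = fps_const fps_X"
definition Z3 :: "'a::comm_ring_1 fps fps fps" where "Z3 = fps_X"

definition lift_y :: "'a::comm_ring_1 fps \<Rightarrow> 'a fps fps" where
  "lift_y s = Abs_fps (\<lambda>j. fps_const (fps_nth s j))"

text \<open>Substitution F(u,v) of series with zero constant term into a bivariate
 series F (coefficientwise finite sums; only meaningful for zero constant terms).\<close>
definition subst21 :: "'a::comm_ring_1 fps fps \<Rightarrow> 'a fps \<Rightarrow> 'a fps \<Rightarrow> 'a fps" where
  "subst21 F u v = Abs_fps (\<lambda>n. \<Sum>i\<le>n. \<Sum>j\<le>n. coeff2 F i j * fps_nth (u ^ i * v ^ j) n)"

definition subst22 :: "'a::comm_ring_1 fps fps \<Rightarrow> 'a fps fps \<Rightarrow> 'a fps fps \<Rightarrow> 'a fps fps" where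
  "subst22 F g h = Abs_fps (\<lambda>b. Abs_fps (\<lambda>a.
     \<Sum>i\<le>a+b. \<Sum>j\<le>a+b. coeff2 F i j * coeff2 (g ^ i * h ^ j) a b))"

definition subst23 :: "'a::comm_ring_1 fps fps \<Rightarrow> 'a fps fps fps \<Rightarrow> 'a fps fps fps \<Rightarrow> 'a fps fps fps" where
  "subst23 F g h = Abs_fps (\<lambda>c. Abs_fps (\<lambda>b. Abs_fps (\<lambda>a.
     \<Sum>i\<le>a+b+c. \<Sum>j\<le>a+b+c. coeff2 F i j * coeff3 (g ^ i * h ^ j) a b c)))"

text \<open>Substitution M(g) of a bivariate series g with zero constant term into a univariate M.\<close>
definition subst12 :: "'a::comm_ring_1 fps \<Rightarrow> 'a fps fps \<Rightarrow> 'a fps fps" where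
  "subst12 M g = Abs_fps (\<lambda>b. Abs_fps (\<lambda>a. \<Sum>i\<le>a+b. fps_nth M i * coeff2 (g ^ i) a b))"

definition formal_group_law :: "'a::comm_ring_1 fps fps \<Rightarrow> bool" where
  "formal_group_law F \<longleftrightarrow>
     coeff2 F 0 0 = 0 \<and> coeff2 F 1 0 = 1 \<and> coeff2 F 0 1 = 1 \<and>
     (\<forall>i j. coeff2 F i j = coeff2 F j i) \<and>
     subst23 F (subst23 F X3 Y3) Z3 = subst23 F X3 (subst23 F Y3 Z3)"

definition fgl_inv :: "'a::comm_ring_1 fps fps \<Rightarrow> 'a fps" where
  "fgl_inv F = (THE s. fps_nth s 0 = 0 \<and> subst21 F fps_X s = 0)"

fun fgl_mult :: "'a::comm_ring_1 fps fps \<Rightarrow> nat \<Rightarrow> 'a fps" where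
  "fgl_mult F 0 = 0"
| "fgl_mult F (Suc 0) = fps_X"
| "fgl_mult F (Suc (Suc n)) = subst21 F (fgl_mult F (Suc n)) fps_X"

end

(* Put D(x, y) = F(x, \<iota>(y)). Its diagonal D(t, t) = F(t, \<iota>(t)) vanishes, so D = (x - y) Q.
   With P(t) = \<partial>F/\<partial>y (t, 0), differentiating associativity in z at z = 0 gives
   P(F(x, y)) = P(y) \<partial>F/\<partial>y (x, y) = P(x) \<partial>F/\<partial>x (x, y); differentiating
   [n+1](t) = F([n](t), t) then gives P [n]' = n P([n]) by induction. As P(0) = 1, p divides
   k [p]_k for every k, so p divides [p]_k unless p divides k, and [p](t) = t^p N(t) + p M(t).
   Hence [p](D) = D^p N(D) + p M(D) = (x - y)^p Q^p N(D) + p M(D), and (x - y)^p is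
   congruent to x^p - y^p modulo p. *)

theory Submission
  imports Defs
begin

unbundle fps_syntax

section \<open>Coefficientwise maps and the diagonal\<close>

definition fps_map :: "('a \<Rightarrow> 'b) \<Rightarrow> 'a fps \<Rightarrow> 'b fps" where
  "fps_map h f = Abs_fps (\<lambda>n. h (f $ n))"

lemma fps_map_nth [simp]: "fps_map h f $ n = h (f $ n)"
  by (simp add: fps_map_def)

lemma fps_map_add:
  assumes "\<And>x y. h (x + y) = h x + h y"
  shows "fps_map h (f + g) = fps_map h f + fps_map h g"
  by (rule fps_ext) (simp add: assms)

lemma fps_map_mult:
  fixes h :: "'a::comm_ring_1 \<Rightarrow> 'b::comm_ring_1"
  assumes add: "\<And>x y. h (x + y) = h x + h y" and mult: "\<And>x y. h (x * y) = h x * h y"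
  shows "fps_map h (f * g) = fps_map h f * fps_map h g"
proof -
  have "h 0 = 0"
    using add[of 0 0] by simp
  then have "h (sum u A) = (\<Sum>i\<in>A. h (u i))" for u :: "nat \<Rightarrow> 'a" and A
    using sum_comp_morphism[of h u A] add by (simp add: o_def)
  then show ?thesis
    by (intro fps_ext) (simp add: fps_mult_nth mult)
qed

lemma fps_map_power:
  fixes h :: "'a::comm_ring_1 \<Rightarrow> 'b::comm_ring_1"
  assumes "\<And>x y. h (x + y) = h x + h y" "\<And>x y. h (x * y) = h x * h y" "h 1 = 1"
  shows "fps_map h (f ^ k) = fps_map h f ^ k"
proof (induct k)
  case 0
  have "h 0 = 0"
    using assms(1)[of 0 0] by simp
  with assms(3) show ?case
    by (intro fps_ext) simp
qed (simp add: fps_map_mult[OF assms(1,2)])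

lemma fps_const_sum: "fps_const (sum f A) = (\<Sum>i\<in>A. fps_const (f i))"
  by (induct A rule: infinite_finite_induct) (simp_all flip: fps_const_add)

lemma fps_mult_nth_cong:
  assumes "\<And>k. k \<le> n \<Longrightarrow> f $ k = f' $ k" "\<And>k. k \<le> n \<Longrightarrow> g $ k = g' $ k"
  shows "(f * g) $ n = (f' * g') $ n"
  using assms by (simp add: fps_mult_nth)

definition fps_diag :: "'a::comm_ring_1 fps fps \<Rightarrow> 'a fps" where
  "fps_diag A = Abs_fps (\<lambda>n. \<Sum>j\<le>n. A $ j $ (n - j))"

lemma fps_diag_nth: "fps_diag A $ n = (\<Sum>j\<le>n. A $ j $ (n - j))"
  by (simp add: fps_diag_def)

lemma fps_diag_nth_conv_sum:
  assumes "n \<le> m"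
  shows "fps_diag A $ n = (\<Sum>j\<le>m. A $ j * fps_X ^ j) $ n"
proof -
  have "(\<Sum>j\<le>m. A $ j * fps_X ^ j) $ n = (\<Sum>j\<le>m. if n < j then 0 else A $ j $ (n - j))"
    by (simp add: fps_sum_nth fps_X_power_mult_right_nth)
  also have "\<dots> = (\<Sum>j\<le>n. A $ j $ (n - j))"
    using assms by (intro sum.mono_neutral_cong_right) auto
  finally show ?thesis by (simp add: fps_diag_nth)
qed

lemma fps_diag_mult: "fps_diag (A * B) = fps_diag A * fps_diag B"
proof (rule fps_ext)
  fix n
  define c where "c i j = (A $ i * B $ j * fps_X ^ (i + j)) $ n" for i j
  have "fps_diag (A * B) $ n = (\<Sum>s\<le>n. \<Sum>i\<le>s. A $ i * B $ (s - i) * fps_X ^ s) $ n"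
    by (simp only: fps_diag_nth_conv_sum[OF order_refl])
       (simp add: fps_mult_nth atLeast0AtMost sum_distrib_right)
  also have "\<dots> = (\<Sum>(i, j)\<in>{(i, j). i + j \<le> n}. c i j)"
    by (simp add: c_def sum.triangle_reindex_eq fps_sum_nth)
  also have "\<dots> = (\<Sum>(i, j)\<in>{..n} \<times> {..n}. c i j)"
    by (intro sum.mono_neutral_left) (auto simp: c_def fps_X_power_mult_right_nth split: if_splits)
  also have "\<dots> = ((\<Sum>i\<le>n. A $ i * fps_X ^ i) * (\<Sum>j\<le>n. B $ j * fps_X ^ j)) $ n"
    by (simp add: c_def sum_product sum.cartesian_product fps_sum_nth power_add mult_ac split_def)
  also have "\<dots> = (fps_diag A * fps_diag B) $ n"
    by (intro fps_mult_nth_cong) (simp_all add: fps_diag_nth_conv_sum)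
  finally show "fps_diag (A * B) $ n = (fps_diag A * fps_diag B) $ n" .
qed

lemma fps_diag_add: "fps_diag (A + B) = fps_diag A + fps_diag B"
  by (rule fps_ext) (simp add: fps_diag_nth sum.distrib)

lemma fps_diag_const [simp]: "fps_diag (fps_const c) = c"
  by (rule fps_ext) (simp add: fps_diag_nth if_distrib[of "\<lambda>x. x $ _"] cong: if_cong)

lemma fps_diag_X [simp]: "fps_diag fps_X = fps_X"
  by (rule fps_ext) (simp add: fps_diag_nth fps_X_nth if_distrib[of "\<lambda>x. x $ _"] cong: if_cong)

lemma fps_diag_power: "fps_diag (A ^ k) = fps_diag A ^ k"
  by (induct k) (simp_all add: fps_diag_mult flip: fps_const_1_eq_1)

lemma fps_deriv_fps_diag:
  "fps_deriv (fps_diag A) = fps_diag (fps_map fps_deriv A + fps_deriv A)"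
proof (rule fps_ext)
  fix n
  have "fps_deriv (fps_diag A) $ n = (\<Sum>j\<le>Suc n. of_nat (Suc n) * A $ j $ (Suc n - j))"
    by (simp only: fps_deriv_nth fps_diag_nth sum_distrib_left mult.commute Suc_eq_plus1)
  also have "\<dots> = (\<Sum>j\<le>Suc n. (of_nat (Suc n - j) + of_nat j) * A $ j $ (Suc n - j))"
    by (intro sum.cong refl) (simp flip: of_nat_add)
  also have "\<dots> = (\<Sum>j\<le>Suc n. of_nat (Suc n - j) * A $ j $ (Suc n - j))
      + (\<Sum>j\<le>Suc n. of_nat j * A $ j $ (Suc n - j))"
    by (simp only: distrib_right sum.distrib)
  also have "(\<Sum>j\<le>Suc n. of_nat (Suc n - j) * A $ j $ (Suc n - j))
      = (\<Sum>j\<le>n. of_nat (Suc (n - j)) * A $ j $ Suc (n - j))"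
    by (auto simp: Suc_diff_le of_nat_diff algebra_simps intro!: sum.cong)
  also have "(\<Sum>j\<le>Suc n. of_nat j * A $ j $ (Suc n - j))
      = (\<Sum>j\<le>n. of_nat (Suc j) * A $ Suc j $ (n - j))"
    by (subst sum.atMost_Suc_shift) simp
  finally show "fps_deriv (fps_diag A) $ n = fps_diag (fps_map fps_deriv A + fps_deriv A) $ n"
    by (simp add: fps_diag_nth sum.distrib fps_of_nat del: of_nat_Suc)
qed

lemma lift_y_nth: "lift_y s $ j $ i = (if i = 0 then s $ j else 0)"
  by (simp add: lift_y_def)

lemma lift_y_eq_const: "lift_y s $ j = fps_const (s $ j)"
  by (simp add: lift_y_def)

lemma lift_y_0 [simp]: "lift_y 0 = 0"
  by (simp add: lift_y_def fps_zero_def)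

lemma fps_diag_lift_y [simp]: "fps_diag (lift_y s) = s"
  by (rule fps_ext) (simp add: fps_diag_nth lift_y_nth if_distrib[of "\<lambda>x. x $ _"] cong: if_cong)

section \<open>Composition over commutative rings\<close>

text \<open>\<^term>\<open>fps_dilate a g\<close> is the bivariate series a(y g(x)), and composition with
  x g(x) is its diagonal. This gives multiplicativity and the chain rule of composition
  over any commutative ring; the library proves them for integral domains only.\<close>

definition fps_dilate :: "'a::comm_ring_1 fps \<Rightarrow> 'a fps \<Rightarrow> 'a fps fps" where
  "fps_dilate a g = Abs_fps (\<lambda>j. fps_const (a $ j) * g ^ j)"

lemma fps_dilate_nth: "fps_dilate a g $ j = fps_const (a $ j) * g ^ j"
  by (simp add: fps_dilate_def)

lemma fps_dilate_mult: "fps_dilate (a * b) g = fps_dilate a g * fps_dilate b g"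
proof (rule fps_ext)
  fix s
  show "fps_dilate (a * b) g $ s = (fps_dilate a g * fps_dilate b g) $ s"
    unfolding fps_dilate_nth fps_mult_nth fps_const_sum sum_distrib_right
  proof (intro sum.cong refl)
    fix i assume "i \<in> {0..s}"
    then have "g ^ s = g ^ i * g ^ (s - i)"
      by (simp flip: power_add)
    then show "fps_const (a $ i * b $ (s - i)) * g ^ s
        = fps_const (a $ i) * g ^ i * (fps_const (b $ (s - i)) * g ^ (s - i))"
      by (simp add: mult_ac)
  qed
qed

lemma fps_compose_X_mult: "a oo (fps_X * g) = fps_diag (fps_dilate a g)"
  by (rule fps_ext)
     (simp add: fps_compose_nth fps_diag_nth fps_dilate_nth power_mult_distrib
        fps_X_power_mult_nth atLeast0AtMost)

lemma fps_X_mult_shift: "c $ 0 = 0 \<Longrightarrow> fps_X * fps_shift 1 c = (c :: 'a::comm_ring_1 fps)"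
  by (rule fps_ext) simp

lemma fps_compose_mult_distrib_cring:
  assumes "c $ 0 = (0::'a::comm_ring_1)"
  shows "(a * b) oo c = (a oo c) * (b oo c)"
  by (subst (1 2 3) fps_X_mult_shift[OF assms, symmetric])
     (simp add: fps_compose_X_mult fps_dilate_mult fps_diag_mult)

lemma fps_compose_deriv_cring:
  assumes "c $ 0 = (0::'a::comm_ring_1)"
  shows "fps_deriv (a oo c) = (fps_deriv a oo c) * fps_deriv c"
proof -
  define g where "g = fps_shift 1 c"
  have c: "c = fps_X * g"
    using fps_X_mult_shift[OF assms] by (simp add: g_def)
  define D where "D = fps_dilate (fps_deriv a) g"
  have x_deriv: "fps_map fps_deriv (fps_dilate a g) = fps_X * D * fps_const (fps_deriv g)"
  proof (rule fps_ext)
    fix j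
    show "fps_map fps_deriv (fps_dilate a g) $ j = (fps_X * D * fps_const (fps_deriv g)) $ j"
    proof (cases j)
      case (Suc i)
      have "fps_deriv (g ^ Suc i) = of_nat (Suc i) * fps_deriv g * g ^ i"
        by (simp only: fps_deriv_power' diff_Suc_1)
      then show ?thesis
        using Suc by (simp add: D_def fps_dilate_nth fps_of_nat mult_ac
            del: power_Suc of_nat_Suc flip: fps_const_mult)
    qed (simp add: fps_dilate_nth)
  qed
  have y_deriv: "fps_deriv (fps_dilate a g) = D * fps_const g"
    by (rule fps_ext)
       (simp add: D_def fps_dilate_nth mult_ac fps_of_nat del: of_nat_Suc flip: fps_const_mult)
  have "fps_deriv (a oo c) = fps_diag D * (fps_X * fps_deriv g + g)"
    by (simp add: c fps_compose_X_mult fps_deriv_fps_diag x_deriv y_deriv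
        fps_diag_add fps_diag_mult algebra_simps)
  also have "\<dots> = (fps_deriv a oo c) * fps_deriv c"
    by (simp add: c D_def fps_compose_X_mult algebra_simps)
  finally show ?thesis .
qed

lemma fps_power_nth_1: "(f ^ j) $ 1 = of_nat j * (f $ 0) ^ (j - 1) * (f $ 1 :: 'a::comm_ring_1)"
proof (induct j)
  case (Suc j)
  then show ?case
    by (cases j) (simp_all add: fps_mult_nth_1 fps_power_zeroth algebra_simps)
qed simp

lemma fps_compose_idempotent_eq_X:
  assumes f0: "f $ 0 = 0" and f1: "f $ 1 = (1::'a::comm_ring_1)" and "f oo f = f"
  shows "f = fps_X"
proof -
  have "f $ m = fps_X $ m" for m
  proof (induct m rule: less_induct)
    case (less m)
    show ?case
    proof (cases "m \<le> 1")
      case True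
      then show ?thesis
        using f0 f1 by (cases m) auto
    next
      case False
      have "f $ m = (f oo f) $ m"
        using assms(3) by simp
      also have "\<dots> = (\<Sum>i<m. f $ i * (f ^ i) $ m) + f $ m * (f ^ m) $ m"
        by (simp add: fps_compose_nth atLeast0AtMost lessThan_Suc_atMost[symmetric]
            del: lessThan_Suc_atMost)
      also have "(\<Sum>i<m. f $ i * (f ^ i) $ m) = (\<Sum>i<m. if i = 1 then f $ m else 0)"
        using less by (intro sum.cong refl) (auto simp: fps_X_nth)
      also have "(f ^ m) $ m = 1"
        using startsby_zero_power_nth_same[OF f0, of m] f1 by simp
      finally have "f $ m = f $ m + f $ m"
        using False by simp
      then show ?thesis
        using False by simp
    qed
  qed
  then show ?thesis
    by (simp add: fps_eq_iff)
qed

lemma fps_power_nth_cong: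
  assumes "\<And>k. k \<le> n \<Longrightarrow> f $ k = g $ k"
  shows "(f ^ j) $ n = (g ^ j) $ n"
  using assms
proof (induct j arbitrary: n)
  case (Suc j)
  then show ?case
    by (auto simp: fps_mult_nth intro!: sum.cong)
qed simp

lemma fps_power_nth_cong_top:
  assumes f0: "f $ 0 = 0" and g0: "g $ 0 = 0" and eq: "\<And>k. k < n \<Longrightarrow> f $ k = g $ k"
    and "j \<noteq> 1"
  shows "(f ^ j) $ n = (g ^ j) $ n"
proof (cases j)
  case (Suc m)
  with \<open>j \<noteq> 1\<close> obtain l where j: "j = Suc (Suc l)"
    by (cases m) auto
  have "f $ i * (f ^ Suc l) $ (n - i) = g $ i * (g ^ Suc l) $ (n - i)" if "i \<le> n" for i
  proof (cases "i = 0 \<or> i = n")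
    case True
    then show ?thesis
      using f0 g0 by (auto simp: fps_power_zeroth)
  next
    case False
    have "(f ^ Suc l) $ (n - i) = (g ^ Suc l) $ (n - i)"
      by (rule fps_power_nth_cong) (use False that in \<open>auto intro: eq\<close>)
    moreover have "f $ i = g $ i"
      using False that by (auto intro: eq)
    ultimately show ?thesis
      by simp
  qed
  then show ?thesis
    unfolding j power_Suc[of _ "Suc l"] fps_mult_nth by (intro sum.cong) auto
qed simp

section \<open>Substitutions into bivariate series\<close>

text \<open>\<^term>\<open>subst_x u A\<close> is A(u(t), t).\<close>

definition subst_x :: "'a::comm_ring_1 fps \<Rightarrow> 'a fps fps \<Rightarrow> 'a fps" where
  "subst_x u A = fps_diag (fps_map (\<lambda>a. a oo u) A)"

lemma subst_x_nth: "subst_x u A $ n = (\<Sum>j\<le>n. \<Sum>i\<le>n - j. A $ j $ i * (u ^ i) $ (n - j))"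
  by (simp add: subst_x_def fps_diag_nth fps_compose_nth atLeast0AtMost)

lemma subst_x_add: "subst_x u (A + B) = subst_x u A + subst_x u B"
  by (simp add: subst_x_def fps_map_add fps_compose_add_distrib fps_diag_add)

lemma subst_x_mult:
  "u $ 0 = 0 \<Longrightarrow> subst_x u (A * B) = subst_x u A * subst_x u B"
  by (simp add: subst_x_def fps_map_mult fps_compose_add_distrib
      fps_compose_mult_distrib_cring fps_diag_mult)

lemma subst_x_const [simp]: "subst_x u (fps_const a) = a oo u"
proof -
  have "fps_map (\<lambda>a. a oo u) (fps_const a) = fps_const (a oo u)"
    by (rule fps_ext) simp
  then show ?thesis
    by (simp add: subst_x_def)
qed

lemma subst_x_power: "u $ 0 = 0 \<Longrightarrow> subst_x u (A ^ k) = subst_x u A ^ k"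
  by (induct k) (simp_all add: subst_x_mult flip: fps_const_1_eq_1)

lemma subst_x_sum: "subst_x u (sum f S) = (\<Sum>i\<in>S. subst_x u (f i))"
  by (induct S rule: infinite_finite_induct)
     (simp_all add: subst_x_add flip: fps_const_0_eq_0)

lemma subst_x_nth_0 [simp]: "subst_x u A $ 0 = A $ 0 $ 0"
  by (simp add: subst_x_nth)

lemma subst_x_cong:
  assumes "\<And>i j. i + j \<le> n \<Longrightarrow> A $ j $ i = B $ j $ i"
  shows "subst_x u A $ n = subst_x u B $ n"
  unfolding subst_x_nth using assms by (intro sum.cong refl) auto

lemma subst_x_lift_y [simp]: "subst_x u (lift_y s) = s"
  by (rule fps_ext)
     (simp add: subst_x_nth lift_y_nth if_distrib[of "\<lambda>x. x * _"] mult_delta_right cong: if_cong)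

lemma subst_x_deriv:
  assumes "u $ 0 = 0"
  shows "fps_deriv (subst_x u A)
    = subst_x u (fps_map fps_deriv A) * fps_deriv u + subst_x u (fps_deriv A)"
proof -
  have "fps_map fps_deriv (fps_map (\<lambda>a. a oo u) A)
      = fps_map (\<lambda>a. a oo u) (fps_map fps_deriv A) * fps_const (fps_deriv u)"
    by (rule fps_ext) (simp add: fps_compose_deriv_cring[OF assms])
  moreover have "fps_deriv (fps_map (\<lambda>a. a oo u) A) = fps_map (\<lambda>a. a oo u) (fps_deriv A)"
    by (rule fps_ext) (simp add: fps_compose_mult_distrib_cring[OF assms] del: of_nat_Suc
        flip: fps_of_nat)
  ultimately show ?thesis
    by (simp add: subst_x_def fps_deriv_fps_diag fps_diag_add fps_diag_mult)
qed

lemma subst21_X_eq_subst_x: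
  assumes "u $ 0 = 0"
  shows "subst21 A u fps_X = subst_x u A"
proof (rule fps_ext)
  fix n
  have "subst21 A u fps_X $ n = (\<Sum>j\<le>n. \<Sum>i\<le>n. A $ j $ i * (u ^ i) $ (n - j))"
    by (simp add: subst21_def coeff2_def fps_X_power_mult_right_nth) (rule sum.swap)
  also have "\<dots> = subst_x u A $ n"
    unfolding subst_x_nth using startsby_zero_power_prefix[OF assms]
    by (intro sum.cong refl sum.mono_neutral_right) auto
  finally show "subst21 A u fps_X $ n = subst_x u A $ n" .
qed

lemma fps2_power_nth_eq_0:
  assumes "A $ 0 $ 0 = 0" "a + b < k"
  shows "(A ^ k) $ b $ a = 0"
  using assms(2)
proof (induct k arbitrary: a b)
  case (Suc k)
  have "A $ q $ r * (A ^ k) $ (b - q) $ (a - r) = 0" if "q \<le> b" "r \<le> a" for q r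
  proof (cases "q = 0 \<and> r = 0")
    case False
    with that Suc show ?thesis by auto
  qed (simp add: assms(1))
  then show ?case
    by (simp add: fps_mult_nth fps_sum_nth)
qed simp

lemma fps2_mult_nth_cong:
  assumes "\<And>a' b'. a' \<le> a \<Longrightarrow> b' \<le> b \<Longrightarrow> T $ b' $ a' = T' $ b' $ a'"
  shows "(E * T) $ b $ a = (E * T') $ b $ a"
  using assms by (auto simp: fps_mult_nth fps_sum_nth intro!: sum.cong)

lemma subst12_nth: "subst12 M A $ b $ a = (\<Sum>i\<le>a + b. M $ i * (A ^ i) $ b $ a)"
  by (simp add: subst12_def coeff2_def)

lemma subst12_nth_conv_sum:
  assumes "E $ 0 $ 0 = 0" "a + b \<le> K"
  shows "subst12 M E $ b $ a = (\<Sum>i\<le>K. fps_const (fps_const (M $ i)) * E ^ i) $ b $ a"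
  unfolding subst12_nth fps_sum_nth using assms
  by (intro sum.mono_neutral_cong_left) (auto simp: fps2_power_nth_eq_0)

lemma subst12_add: "subst12 (M + N) E = subst12 M E + subst12 N E"
  by (intro fps_ext) (simp add: subst12_nth sum.distrib distrib_right)

lemma subst12_const_mult: "subst12 (fps_const c * M) E = fps_const (fps_const c) * subst12 M E"
  by (intro fps_ext) (simp add: subst12_nth sum_distrib_left mult.assoc)

lemma subst12_X_mult:
  assumes E0: "E $ 0 $ 0 = 0"
  shows "subst12 (fps_X * N) E = E * subst12 N E"
proof (intro fps_ext)
  fix b a
  define S where "S = (\<Sum>i\<le>a + b. fps_const (fps_const (N $ i)) * E ^ i)"
  have "(E * subst12 N E) $ b $ a = (E * S) $ b $ a"
    by (intro fps2_mult_nth_cong) (simp add: S_def subst12_nth_conv_sum[OF E0])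
  also have "E * S = (\<Sum>i\<le>a + b. fps_const (fps_const (N $ i)) * E ^ Suc i)"
    by (simp add: S_def sum_distrib_left mult_ac)
  also have "\<dots> = (\<Sum>i\<le>Suc (a + b). fps_const (fps_const ((fps_X * N) $ i)) * E ^ i)"
    by (subst sum.atMost_Suc_shift) simp
  also have "\<dots> $ b $ a = subst12 (fps_X * N) E $ b $ a"
    by (rule subst12_nth_conv_sum[OF E0, symmetric]) simp
  finally show "subst12 (fps_X * N) E $ b $ a = (E * subst12 N E) $ b $ a" ..
qed

lemma subst12_X_power_mult:
  assumes "E $ 0 $ 0 = 0"
  shows "subst12 (fps_X ^ k * N) E = E ^ k * subst12 N E"
proof (induct k)
  case (Suc k)
  have "subst12 (fps_X ^ Suc k * N) E = subst12 (fps_X * (fps_X ^ k * N)) E"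
    by (simp add: mult.assoc)
  then show ?case
    by (simp add: subst12_X_mult[OF assms] Suc mult.assoc)
qed simp

lemma subst_x_subst12:
  assumes u: "u $ 0 = 0" and A: "A $ 0 $ 0 = 0"
  shows "subst_x u (subst12 M A) = M oo subst_x u A"
proof (rule fps_ext)
  fix n
  define S where "S = (\<Sum>k\<le>n. fps_const (fps_const (M $ k)) * A ^ k)"
  have "subst_x u (subst12 M A) $ n = subst_x u S $ n"
  proof (rule subst_x_cong)
    fix i j assume "i + j \<le> n"
    then show "subst12 M A $ j $ i = S $ j $ i"
      unfolding S_def by (rule subst12_nth_conv_sum[OF A])
  qed
  also have "\<dots> = (M oo subst_x u A) $ n"
    by (simp add: S_def subst_x_sum subst_x_mult[OF u] subst_x_power[OF u] fps_sum_nth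
        fps_compose_nth atLeast0AtMost)
  finally show "subst_x u (subst12 M A) $ n = (M oo subst_x u A) $ n" .
qed

lemma subst22_nth:
  "subst22 F g h $ b $ a = (\<Sum>i\<le>a + b. \<Sum>j\<le>a + b. F $ j $ i * (g ^ i * h ^ j) $ b $ a)"
  by (simp add: subst22_def coeff2_def)

lemma fps_diag_subst22: "fps_diag (subst22 F g h) = subst21 F (fps_diag g) (fps_diag h)"
proof (rule fps_ext)
  fix n
  have "fps_diag (subst22 F g h) $ n
      = (\<Sum>b\<le>n. \<Sum>i\<le>n. \<Sum>j\<le>n. F $ j $ i * (g ^ i * h ^ j) $ b $ (n - b))"
    by (simp add: fps_diag_nth subst22_nth)
  also have "\<dots> = (\<Sum>i\<le>n. \<Sum>j\<le>n. \<Sum>b\<le>n. F $ j $ i * (g ^ i * h ^ j) $ b $ (n - b))"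
    by (subst sum.swap, rule sum.cong[OF refl], rule sum.swap)
  also have "\<dots> = subst21 F (fps_diag g) (fps_diag h) $ n"
    by (simp add: subst21_def coeff2_def fps_diag_nth sum_distrib_left
        flip: fps_diag_power fps_diag_mult)
  finally show "fps_diag (subst22 F g h) $ n = subst21 F (fps_diag g) (fps_diag h) $ n" .
qed

definition fps2_swap :: "'a::comm_ring_1 fps fps \<Rightarrow> 'a fps fps" where
  "fps2_swap A = Abs_fps (\<lambda>j. Abs_fps (\<lambda>i. A $ i $ j))"

lemma fps2_swap_nth [simp]: "fps2_swap A $ j $ i = A $ i $ j"
  by (simp add: fps2_swap_def)

lemma fps2_swap_mult: "fps2_swap (A * B) = fps2_swap A * fps2_swap B"
  by (intro fps_ext) (simp add: fps_mult_nth fps_sum_nth sum_distrib_left, rule sum.swap)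

lemma fps2_swap_power: "fps2_swap (A ^ k) = fps2_swap A ^ k"
proof (induct k)
  case 0
  show ?case
    by (intro fps_ext) simp
qed (simp add: fps2_swap_mult)

lemma fps2_swap_lift_y: "fps2_swap (lift_y s) = fps_const s"
  by (intro fps_ext) (simp add: lift_y_nth)

lemma fps2_swap_deriv: "fps2_swap (fps_deriv A) = fps_map fps_deriv (fps2_swap A)"
  by (intro fps_ext) (simp del: of_nat_Suc)

lemma fps2_swap_subst12: "fps2_swap (subst12 M A) = subst12 M (fps2_swap A)"
  by (intro fps_ext) (simp add: subst12_nth add.commute flip: fps2_swap_power)

text \<open>\<^term>\<open>fps2_diff_quot A\<close> is (A(x, y) - A(y, y)) / (x - y).\<close>

definition fps2_diff_quot :: "'a::comm_ring_1 fps fps \<Rightarrow> 'a fps fps" where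
  "fps2_diff_quot A = Abs_fps (\<lambda>l. Abs_fps (\<lambda>k. \<Sum>m\<le>l. A $ (l - m) $ (k + 1 + m)))"

lemma fps2_diff_quot_nth: "fps2_diff_quot A $ l $ k = (\<Sum>m\<le>l. A $ (l - m) $ (k + 1 + m))"
  by (simp add: fps2_diff_quot_def)

lemma fps2_sub_diag_eq: "A - lift_y (fps_diag A) = (X2 - Y2) * fps2_diff_quot A"
proof (intro fps_ext)
  fix l k
  let ?Q = "fps2_diff_quot A"
  have rhs: "((X2 - Y2) * ?Q) $ l $ k
      = (if k = 0 then 0 else ?Q $ l $ (k - 1)) - (if l = 0 then 0 else ?Q $ (l - 1) $ k)"
    by (simp add: X2_def Y2_def left_diff_distrib)
  show "(A - lift_y (fps_diag A)) $ l $ k = ((X2 - Y2) * ?Q) $ l $ k"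
  proof (cases l)
    case 0
    then show ?thesis
      using rhs by (cases k) (simp_all add: lift_y_nth fps_diag_nth fps2_diff_quot_nth)
  next
    case (Suc l')
    show ?thesis
    proof (cases k)
      case 0
      have "fps_diag A $ l = A $ l $ 0 + (\<Sum>j<l. A $ j $ (l - j))"
        by (simp add: fps_diag_nth Suc lessThan_Suc_atMost[symmetric] del: lessThan_Suc_atMost)
      also have "(\<Sum>j<l. A $ j $ (l - j)) = (\<Sum>m<l. A $ (l - Suc m) $ (l - (l - Suc m)))"
        by (rule sum.nat_diff_reindex[symmetric])
      also have "\<dots> = ?Q $ l' $ 0"
        by (simp add: fps2_diff_quot_nth Suc lessThan_Suc_atMost Suc_diff_le)
      finally show ?thesis
        using rhs 0 Suc by (simp add: lift_y_nth)
    next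
      case (Suc k')
      have "?Q $ l $ k' = A $ l $ k + (\<Sum>m\<le>l'. A $ (l' - m) $ (k + 1 + m))"
        by (simp only: fps2_diff_quot_nth \<open>l = Suc l'\<close> sum.atMost_Suc_shift Suc) simp
      then show ?thesis
        using rhs Suc \<open>l = Suc l'\<close> by (simp add: lift_y_nth fps2_diff_quot_nth)
    qed
  qed
qed

section \<open>Formal group laws\<close>

text \<open>\<^term>\<open>lift_yz F\<close> is F(y, z) as a series in x, y, z.\<close>

definition lift_yz :: "'a::comm_ring_1 fps fps \<Rightarrow> 'a fps fps fps" where
  "lift_yz F = fps_map (fps_map fps_const) F"

lemma lift_yz_nth: "lift_yz F $ c $ b $ a = (if a = 0 then F $ c $ b else 0)"
  by (simp add: lift_yz_def)

lemma lift_yz_power: "lift_yz F ^ j = lift_yz (F ^ j)"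
proof -
  have add: "fps_map fps_const (f + g) = fps_map fps_const f + fps_map fps_const g"
    for f g :: "'a fps"
    by (rule fps_ext) simp
  have mult: "fps_map fps_const (f * g) = fps_map fps_const f * fps_map fps_const g"
    for f g :: "'a fps"
    by (rule fps_map_mult) simp_all
  have "fps_map fps_const (1 :: 'a fps) = 1"
    by (rule fps_ext) simp
  with add mult show ?thesis
    unfolding lift_yz_def by (intro fps_map_power[symmetric])
qed

lemma subst23_nth:
  "subst23 F g h $ c $ b $ a
    = (\<Sum>i\<le>a + b + c. \<Sum>j\<le>a + b + c. F $ j $ i * (g ^ i * h ^ j) $ c $ b $ a)"
  by (simp add: subst23_def coeff2_def coeff3_def)

lemma sum_sum_delta:
  assumes "a \<le> (N::nat)" "b \<le> N"
  shows "(\<Sum>i\<le>N. \<Sum>j\<le>N. if b = j \<and> a = i then f j i else 0) = f b a"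
proof -
  have "(\<Sum>j\<le>N. if b = j \<and> a = i then f j i else 0) = (if a = i then f b i else 0)" for i
    using assms by (cases "a = i") simp_all
  then show ?thesis
    using assms by simp
qed

lemma subst23_X3_Y3: "subst23 F X3 Y3 = fps_const F"
proof (intro fps_ext)
  fix c b a
  have "subst23 F X3 Y3 $ c $ b $ a
      = (\<Sum>i\<le>a + b + c. \<Sum>j\<le>a + b + c. F $ j $ i * (if c = 0 \<and> b = j \<and> a = i then 1 else 0))"
    by (auto simp: subst23_nth X3_def Y3_def fps_X_power_mult_nth intro!: sum.cong)
  also have "\<dots> = (if c = 0 then F $ b $ a else 0)"
    by (simp add: if_distrib[of "\<lambda>x. _ * x"] sum_sum_delta cong: if_cong)
  finally show "subst23 F X3 Y3 $ c $ b $ a = fps_const F $ c $ b $ a"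
    by simp
qed

lemma subst23_Y3_Z3: "subst23 F Y3 Z3 = lift_yz F"
proof (intro fps_ext)
  fix c b a
  have "subst23 F Y3 Z3 $ c $ b $ a
      = (\<Sum>i\<le>a + b + c. \<Sum>j\<le>a + b + c. F $ j $ i * (if c = j \<and> b = i \<and> a = 0 then 1 else 0))"
    by (auto simp: subst23_nth Y3_def Z3_def intro!: sum.cong)
  also have "\<dots> = lift_yz F $ c $ b $ a"
    by (simp add: if_distrib[of "\<lambda>x. _ * x"] sum_sum_delta lift_yz_nth cong: if_cong)
  finally show "subst23 F Y3 Z3 $ c $ b $ a = lift_yz F $ c $ b $ a" .
qed

text \<open>In the locale, \<^term>\<open>F $ 1\<close> is the series P(x) = \<partial>F/\<partial>y (x, 0).\<close>

locale fgl =
  fixes F :: "'a::comm_ring_1 fps fps"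
  assumes fgl: "formal_group_law F"
begin

lemma F_0_0: "F $ 0 $ 0 = 0"
  and F_0_1: "F $ 0 $ 1 = 1"
  and F_1_0: "F $ 1 $ 0 = 1"
  and F_sym: "F $ j $ i = F $ i $ j"
  and F_assoc: "subst23 F (subst23 F X3 Y3) Z3 = subst23 F X3 (subst23 F Y3 Z3)"
  using fgl by (simp_all add: formal_group_law_def coeff2_def)

text \<open>The coefficients of x^a y^b z^c in F(F(x, y), z) and in F(x, F(y, z)).\<close>

lemma assoc_coeffs:
  "(\<Sum>i\<le>a + b + c. F $ c $ i * (F ^ i) $ b $ a) = (\<Sum>j\<le>a + b + c. F $ j $ a * (F ^ j) $ c $ b)"
proof -
  have "subst23 F (fps_const F) Z3 $ c $ b $ a
      = (\<Sum>i\<le>a + b + c. \<Sum>j\<le>a + b + c. F $ j $ i * (if c = j then (F ^ i) $ b $ a else 0))"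
    by (auto simp: subst23_nth Z3_def intro!: sum.cong)
  also have "\<dots> = (\<Sum>i\<le>a + b + c. F $ c $ i * (F ^ i) $ b $ a)"
    by (simp add: if_distrib[of "\<lambda>x. _ * x"] cong: if_cong)
  finally have lhs: "subst23 F (fps_const F) Z3 $ c $ b $ a = \<dots>" .
  have "subst23 F X3 (lift_yz F) $ c $ b $ a
      = (\<Sum>i\<le>a + b + c. \<Sum>j\<le>a + b + c. F $ j $ i * (if i = a then (F ^ j) $ c $ b else 0))"
    by (auto simp: subst23_nth X3_def lift_yz_power fps_X_power_mult_nth lift_yz_nth
        intro!: sum.cong)
  also have "\<dots> = (\<Sum>j\<le>a + b + c. F $ j $ a * (F ^ j) $ c $ b)"
    by (subst sum.swap) (simp add: if_distrib[of "\<lambda>x. _ * x"] sum.delta' cong: if_cong)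
  finally have rhs: "subst23 F X3 (lift_yz F) $ c $ b $ a = \<dots>" .
  show ?thesis
    using F_assoc lhs rhs by (simp add: subst23_X3_Y3 subst23_Y3_Z3)
qed

text \<open>Setting y = z = 0 in associativity shows that F(x, 0) is idempotent under composition.\<close>

lemma F_x_0: "F $ 0 = fps_X"
proof (rule fps_compose_idempotent_eq_X)
  show "F $ 0 oo F $ 0 = F $ 0"
  proof (rule fps_ext)
    fix a
    have "(\<Sum>j\<le>a. F $ j $ a * (F ^ j) $ 0 $ 0) = F $ 0 $ a"
      by (simp add: fps_power_zeroth F_0_0 zero_power sum.atMost_shift del: power_Suc)
    then show "(F $ 0 oo F $ 0) $ a = F $ 0 $ a"
      using assoc_coeffs[where a = a and b = 0 and c = 0]
      by (simp add: fps_compose_nth fps_power_zeroth atLeast0AtMost)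
  qed
qed (use F_0_0 F_0_1 in simp_all)

lemma F_nth_0: "F $ j $ 0 = (if j = 1 then 1 else 0)"
  using F_sym[of j 0] F_x_0 by simp

text \<open>Compare the coefficients of z^1 in associativity.\<close>

lemma deriv_y_F: "fps_deriv F * lift_y (F $ 1) = subst12 (F $ 1) F"
proof (intro fps_ext)
  fix b a
  define P where "P = F $ 1"
  have F_power_1: "(F ^ Suc k) $ 1 $ b = of_nat (Suc k) * (if b < k then 0 else P $ (b - k))" for k
  proof -
    have "(F ^ Suc k) $ 1 = of_nat (Suc k) * (fps_X ^ k * P)"
      using fps_power_nth_1[of F "Suc k"] F_x_0 by (simp add: P_def mult_ac)
    then show ?thesis
      by (simp add: fps_X_power_mult_nth flip: fps_of_nat del: of_nat_Suc)
  qed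
  have "subst12 P F $ b $ a = (\<Sum>i\<le>a + b + 1. F $ 1 $ i * (F ^ i) $ b $ a)"
    using fps2_power_nth_eq_0[OF F_0_0, of a b "Suc (a + b)"] by (simp add: subst12_nth P_def)
  also have "\<dots> = (\<Sum>j\<le>a + b + 1. F $ j $ a * (F ^ j) $ 1 $ b)"
    by (rule assoc_coeffs)
  also have "\<dots> = (\<Sum>k\<le>a + b. F $ Suc k $ a * (F ^ Suc k) $ 1 $ b)"
    by (simp only: Suc_eq_plus1[symmetric] sum.atMost_Suc_shift) simp
  also have "\<dots> = (\<Sum>k\<le>b. of_nat (Suc k) * F $ Suc k $ a * P $ (b - k))"
    unfolding F_power_1 by (intro sum.mono_neutral_cong_right) auto
  also have "\<dots> = (fps_deriv F * lift_y P) $ b $ a"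
    unfolding fps_mult_nth[of "fps_deriv F"]
    by (simp add: lift_y_eq_const fps_sum_nth atLeast0AtMost del: of_nat_Suc)
  finally show "(fps_deriv F * lift_y (F $ 1)) $ b $ a = subst12 (F $ 1) F $ b $ a"
    by (simp add: P_def)
qed

lemma fps2_swap_F: "fps2_swap F = F"
  by (intro fps_ext) (simp add: F_sym)

lemma deriv_x_F: "fps_map fps_deriv F * fps_const (F $ 1) = subst12 (F $ 1) F"
  using arg_cong[OF deriv_y_F, of fps2_swap]
  by (simp add: fps2_swap_mult fps2_swap_lift_y fps2_swap_deriv fps2_swap_subst12 fps2_swap_F)

lemma subst_x_0_F: "subst_x 0 F = fps_X"
  by (rule fps_ext)
     (simp add: subst_x_nth F_nth_0 power_0_left if_distrib[of "\<lambda>x. x $ _"]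
        if_distrib[of "\<lambda>x. _ * x"] cong: if_cong)

end

section \<open>The multiplication-by-n series\<close>

lemma fps_dvd_nth_if_dvd_unit_mult:
  fixes f g :: "'a::comm_ring_1 fps"
  assumes f0: "f $ 0 = 1" and dvd: "\<And>n. c dvd (f * g) $ n"
  shows "c dvd g $ n"
proof (induct n rule: less_induct)
  case (less n)
  have "(f * g) $ n = g $ n + (\<Sum>i\<in>{1..n}. f $ i * g $ (n - i))"
    by (simp add: fps_mult_nth f0 sum.atLeast_Suc_atMost)
  moreover have "c dvd (\<Sum>i\<in>{1..n}. f $ i * g $ (n - i))"
    by (intro dvd_sum dvd_mult less) auto
  ultimately show ?case
    using dvd[of n] by (metis dvd_add_left_iff)
qed

lemma of_nat_dvd_mult_coprime:
  fixes x :: "'a::comm_ring_1"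
  assumes "coprime k p" and "of_nat p dvd of_nat k * x"
  shows "of_nat p dvd x"
proof -
  obtain a b where "a * int k + b * int p = 1"
    using bezout_int[of "int k" "int p"] assms(1) by (auto simp: coprime_iff_gcd_eq_1)
  then have "of_int a * of_nat k + of_int b * of_nat p = (1::'a)"
    by (metis of_int_1 of_int_add of_int_mult of_int_of_nat_eq)
  then have "x = of_int a * (of_nat k * x) + of_nat p * (of_int b * x)"
    by (metis (no_types, lifting) distrib_right mult.assoc mult.commute mult_1)
  with assms(2) show ?thesis
    by (metis dvd_add dvd_mult dvd_triv_left)
qed

lemma fps_eq_X_power_mult_plus_const_mult:
  fixes f :: "'a::comm_ring_1 fps"
  assumes "\<And>k. k < n \<Longrightarrow> c dvd f $ k"
  obtains g h where "f = fps_X ^ n * g + fps_const c * h"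
proof
  define h where "h = Abs_fps (\<lambda>k. if k < n then (SOME d. f $ k = c * d) else 0)"
  have "fps_cutoff n f = fps_const c * h"
  proof (rule fps_ext)
    fix k
    show "fps_cutoff n f $ k = (fps_const c * h) $ k"
      using someI_ex[of "\<lambda>d. f $ k = c * d"] assms[of k] by (auto simp: h_def dvd_def)
  qed
  then show "f = fps_X ^ n * fps_shift n f + fps_const c * h"
    using fps_shift_cutoff'[of n f] by simp
qed

context fgl
begin

lemma fgl_mult_nth_0: "fgl_mult F n $ 0 = 0"
  by (induct rule: fgl_mult.induct[of "\<lambda>_ n. fgl_mult F n $ 0 = 0"])
     (simp_all add: subst21_X_eq_subst_x F_0_0)

lemma fgl_mult_Suc: "fgl_mult F (Suc n) = subst_x (fgl_mult F n) F"
  by (cases n) (simp_all add: subst_x_0_F subst21_X_eq_subst_x fgl_mult_nth_0)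

lemma fgl_mult_deriv: "F $ 1 * fps_deriv (fgl_mult F n) = of_nat n * (F $ 1 oo fgl_mult F n)"
proof (induct n)
  case (Suc n)
  define u where "u = fgl_mult F n"
  define P where "P = F $ 1"
  have u0: "u $ 0 = 0"
    by (simp add: u_def fgl_mult_nth_0)
  have IH: "P * fps_deriv u = of_nat n * (P oo u)"
    using Suc by (simp add: u_def P_def)
  have y: "P * subst_x u (fps_deriv F) = P oo subst_x u F"
    using arg_cong[OF deriv_y_F, of "subst_x u"]
    by (simp add: P_def subst_x_mult[OF u0] subst_x_subst12[OF u0 F_0_0] mult.commute)
  have x: "(P oo u) * subst_x u (fps_map fps_deriv F) = P oo subst_x u F"
    using arg_cong[OF deriv_x_F, of "subst_x u"]
    by (simp add: P_def subst_x_mult[OF u0] subst_x_subst12[OF u0 F_0_0] mult.commute)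
  have "P * fps_deriv (subst_x u F)
      = subst_x u (fps_map fps_deriv F) * (P * fps_deriv u) + P * subst_x u (fps_deriv F)"
    by (simp add: subst_x_deriv[OF u0] algebra_simps)
  also have "\<dots> = of_nat n * ((P oo u) * subst_x u (fps_map fps_deriv F)) + (P oo subst_x u F)"
    by (simp add: IH y algebra_simps)
  also have "\<dots> = of_nat (Suc n) * (P oo subst_x u F)"
    by (simp add: x algebra_simps)
  finally show ?case
    by (simp add: fgl_mult_Suc u_def P_def)
qed simp

lemma fgl_mult_prime_nth_dvd:
  assumes "prime p" "\<not> p dvd k"
  shows "of_nat p dvd fgl_mult F p $ k"
proof (rule of_nat_dvd_mult_coprime)
  show "coprime k p"
    using prime_imp_coprime[OF assms] by (simp add: coprime_commute)
  have "of_nat p dvd (F $ 1 * fps_deriv (fgl_mult F p)) $ n" for n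
    by (simp only: fgl_mult_deriv fps_mult_of_nat_nth dvd_triv_left)
  then have "of_nat p dvd fps_deriv (fgl_mult F p) $ (k - 1)"
    by (rule fps_dvd_nth_if_dvd_unit_mult[rotated]) (rule F_1_0)
  moreover have "k \<noteq> 0"
    using assms(2) by (metis dvd_0_right)
  ultimately show "of_nat p dvd of_nat k * fgl_mult F p $ k"
    by simp
qed

lemma fgl_mult_prime_decomp:
  assumes "prime p"
  obtains N M where "fgl_mult F p = fps_X ^ p * N + fps_const (of_nat p) * M"
proof (rule fps_eq_X_power_mult_plus_const_mult)
  fix k assume "k < p"
  show "of_nat p dvd fgl_mult F p $ k"
  proof (cases "k = 0")
    case False
    with \<open>k < p\<close> have "\<not> p dvd k"
      by (auto dest: dvd_imp_le)
    then show ?thesis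
      by (rule fgl_mult_prime_nth_dvd[OF assms])
  qed (simp add: fgl_mult_nth_0)
qed

end

section \<open>The inversion series\<close>

locale unitriangular_fps_map =
  fixes G :: "'a::comm_ring_1 fps \<Rightarrow> 'a fps"
  assumes nth_0: "s $ 0 = 0 \<Longrightarrow> G s $ 0 = 0"
    and nth_step: "\<lbrakk>s $ 0 = 0; s' $ 0 = 0; 0 < n; \<And>k. k < n \<Longrightarrow> s $ k = s' $ k\<rbrakk>
      \<Longrightarrow> G s $ n = G s' $ n + (s $ n - s' $ n)"
begin

lemma nth_cong:
  assumes "s $ 0 = 0" "s' $ 0 = 0" "\<And>k. k \<le> n \<Longrightarrow> s $ k = s' $ k"
  shows "G s $ n = G s' $ n"
  using assms nth_0 nth_step[OF assms(1,2), of n] by (cases "n = 0") auto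

text \<open>\<^term>\<open>approx n\<close> solves G s = 0 modulo t^(n+1): by \<open>nth_step\<close>, subtracting
  (G s)_(n+1) t^(n+1) from s kills the next coefficient of G s and keeps the lower ones.\<close>

fun approx :: "nat \<Rightarrow> 'a fps" where
  "approx 0 = 0"
| "approx (Suc n) = approx n - fps_const (G (approx n) $ Suc n) * fps_X ^ Suc n"

lemma approx_nth_0: "approx n $ 0 = 0"
  by (induct n) simp_all

lemma approx_nth_above: "n < k \<Longrightarrow> approx n $ k = 0"
  by (induct n) auto

lemma approx_nth_stable: "k \<le> n \<Longrightarrow> approx n $ k = approx k $ k"
  by (induct n) (auto simp: le_Suc_eq)

lemma G_approx_nth: "k \<le> n \<Longrightarrow> G (approx n) $ k = 0"
proof (induct n arbitrary: k)
  case 0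
  then show ?case
    by (simp add: nth_0)
next
  case (Suc n)
  show ?case
  proof (cases "k \<le> n")
    case True
    have "G (approx (Suc n)) $ k = G (approx n) $ k"
      using True by (intro nth_cong) (auto simp: approx_nth_0)
    then show ?thesis
      using Suc True by simp
  next
    case False
    have "approx n $ Suc n = 0"
      by (simp add: approx_nth_above)
    moreover have "G (approx (Suc n)) $ Suc n
        = G (approx n) $ Suc n + (approx (Suc n) $ Suc n - approx n $ Suc n)"
      by (intro nth_step) (auto simp: approx_nth_0)
    ultimately show ?thesis
      using False Suc.prems by (simp add: le_Suc_eq)
  qed
qed

lemma zero_unique:
  assumes s: "s $ 0 = 0" "G s = 0" and s': "s' $ 0 = 0" "G s' = 0"
  shows "s = s'"
proof -
  have "s $ n = s' $ n" for n
  proof (induct n rule: less_induct)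
    case (less n)
    then show ?case
      using s s' nth_step[of s s' n] by (cases "n = 0") auto
  qed
  then show ?thesis
    by (simp add: fps_eq_iff)
qed

lemma ex1_zero: "\<exists>!s. s $ 0 = 0 \<and> G s = 0"
proof -
  define s where "s = Abs_fps (\<lambda>k. approx k $ k)"
  have "G s $ n = G (approx n) $ n" for n
  proof (rule nth_cong)
    fix k assume "k \<le> n"
    then show "s $ k = approx n $ k"
      using approx_nth_stable[OF \<open>k \<le> n\<close>] by (simp add: s_def)
  qed (simp_all add: s_def approx_nth_0)
  then have "s $ 0 = 0 \<and> G s = 0"
    by (simp add: fps_eq_iff G_approx_nth s_def approx_nth_0)
  then show ?thesis
    using zero_unique by blast
qed

end

lemma subst21_X_left_nth:
  "subst21 F fps_X s $ n = (\<Sum>i\<le>n. \<Sum>j\<le>n. F $ j $ i * (if n < i then 0 else (s ^ j) $ (n - i)))"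
  by (simp add: subst21_def coeff2_def fps_X_power_mult_nth)

context fgl
begin

lemma unitriangular_subst21_X_left: "unitriangular_fps_map (subst21 F fps_X)"
proof
  fix s :: "'a fps"
  show "subst21 F fps_X s $ 0 = 0"
    by (simp add: subst21_X_left_nth F_0_0)
next
  fix s s' :: "'a fps" and n :: nat
  assume s0: "s $ 0 = 0" and s'0: "s' $ 0 = 0" and "0 < n"
    and eq: "\<And>k. k < n \<Longrightarrow> s $ k = s' $ k"
  have diff: "F $ j $ i * ((if n < i then 0 else (s ^ j) $ (n - i))
        - (if n < i then 0 else (s' ^ j) $ (n - i)))
      = (if 1 = j \<and> 0 = i then s $ n - s' $ n else 0)" for i j
  proof (cases "i = 0")
    case True
    then show ?thesis
      using fps_power_nth_cong_top[OF s0 s'0 eq, of j] by (auto simp: F_nth_0)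
  next
    case False
    have "n < i \<or> (s ^ j) $ (n - i) = (s' ^ j) $ (n - i)"
      using False eq by (auto intro: fps_power_nth_cong)
    then show ?thesis
      using False by auto
  qed
  then have "subst21 F fps_X s $ n - subst21 F fps_X s' $ n
      = (\<Sum>i\<le>n. \<Sum>j\<le>n. if 1 = j \<and> 0 = i then s $ n - s' $ n else 0)"
    by (simp only: subst21_X_left_nth diff flip: sum_subtractf right_diff_distrib)
  also have "\<dots> = s $ n - s' $ n"
    using \<open>0 < n\<close> by (subst sum_sum_delta) simp_all
  finally show "subst21 F fps_X s $ n = subst21 F fps_X s' $ n + (s $ n - s' $ n)"
    by (simp add: algebra_simps)
qed

lemma fgl_inv: "fgl_inv F $ 0 = 0" "subst21 F fps_X (fgl_inv F) = 0"
  using theI'[OF unitriangular_fps_map.ex1_zero[OF unitriangular_subst21_X_left]]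
  by (simp_all add: fgl_inv_def)


lemma F_x_inv_y_eq:
  "subst22 F X2 (lift_y (fgl_inv F)) = (X2 - Y2) * fps2_diff_quot (subst22 F X2 (lift_y (fgl_inv F)))"
proof -
  have "fps_diag (subst22 F X2 (lift_y (fgl_inv F))) = 0"
    using fgl_inv by (simp add: fps_diag_subst22 X2_def)
  then show ?thesis
    using fps2_sub_diag_eq[of "subst22 F X2 (lift_y (fgl_inv F))"] by simp
qed

end

section \<open>Reduction modulo p\<close>

lemma prime_dvd_power_add_sub:
  fixes x y :: "'a::comm_ring_1"
  assumes p: "prime p"
  shows "of_nat p dvd (x + y) ^ p - x ^ p - y ^ p"
proof -
  define t where "t k = of_nat (p choose k) * x ^ k * y ^ (p - k)" for k
  have "0 < p"
    using p by (simp add: prime_gt_0_nat)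
  then have "{..p} = insert 0 (insert p {1..<p})"
    by auto
  then have "(x + y) ^ p = y ^ p + x ^ p + (\<Sum>k\<in>{1..<p}. t k)"
    using \<open>0 < p\<close> by (simp add: binomial_ring t_def add_ac)
  moreover have "of_nat p dvd t k" if "k \<in> {1..<p}" for k
  proof -
    have "p dvd p choose k"
      using that p by (intro dvd_choose_prime) auto
    then obtain q where "p choose k = p * q"
      by (elim dvdE)
    then show ?thesis
      by (simp add: t_def mult.assoc)
  qed
  ultimately show ?thesis
    by (simp add: dvd_sum del: atLeastLessThan_iff)
qed

lemma prime_dvd_power_diff_sub:
  fixes x y :: "'a::comm_ring_1"
  assumes p: "prime p"
  shows "of_nat p dvd (x - y) ^ p - (x ^ p - y ^ p)"
proof -
  have "of_nat p dvd (- y) ^ p + y ^ p"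
  proof (cases "p = 2")
    case True
    then show ?thesis
      by (simp add: mult_2 [symmetric])
  next
    case False
    then have "odd p"
      using p prime_ge_2_nat[OF p] prime_odd_nat by force
    then show ?thesis
      by (simp add: power_minus_odd)
  qed
  moreover have "of_nat p dvd (x - y) ^ p - x ^ p - (- y) ^ p"
    using prime_dvd_power_add_sub[OF p, of x "- y"] by simp
  ultimately have "of_nat p dvd ((x - y) ^ p - x ^ p - (- y) ^ p) + ((- y) ^ p + y ^ p)"
    by (rule dvd_add[rotated])
  then show ?thesis
    by (simp add: algebra_simps)
qed

theorem lemma8:
  fixes F :: "'a::comm_ring_1 fps fps" and p :: nat
  assumes "prime p" and "formal_group_law F"
  shows "\<exists>A B :: 'a fps fps.
           subst12 (fgl_mult F p) (subst22 F X2 (lift_y (fgl_inv F)))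
             = (X2 ^ p - Y2 ^ p) * A + of_nat p * B"
proof -
  interpret fgl F
    by (rule fgl.intro) (rule assms(2))
  define D where "D = subst22 F X2 (lift_y (fgl_inv F))"
  define Q where "Q = fps2_diff_quot D"
  have D0: "D $ 0 $ 0 = 0"
    by (simp add: D_def subst22_nth F_0_0)
  have D: "D = (X2 - Y2) * Q"
    using F_x_inv_y_eq by (simp add: D_def Q_def)
  obtain N M where M: "fgl_mult F p = fps_X ^ p * N + fps_const (of_nat p) * M"
    using fgl_mult_prime_decomp[OF assms(1)] .
  obtain V where V: "(X2 - Y2) ^ p = X2 ^ p - Y2 ^ p + of_nat p * (V :: 'a fps fps)"
    using prime_dvd_power_diff_sub[OF assms(1), of X2 Y2] by (auto elim!: dvdE simp: algebra_simps)
  have "subst12 (fgl_mult F p) D = D ^ p * subst12 N D + of_nat p * subst12 M D"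
    by (simp only: M subst12_add subst12_const_mult subst12_X_power_mult[OF D0])
       (simp add: fps_of_nat)
  also have "D ^ p = (X2 ^ p - Y2 ^ p + of_nat p * V) * Q ^ p"
    by (subst D) (simp only: power_mult_distrib V)
  finally have "subst12 (fgl_mult F p) D
      = (X2 ^ p - Y2 ^ p) * (Q ^ p * subst12 N D) + of_nat p * (V * Q ^ p * subst12 N D + subst12 M D)"
    by (simp add: algebra_simps)
  then show ?thesis
    unfolding D_def by blast
qed

end
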